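(* Let $M$ be a mechanism for a combinatorial auction setting with item set $[m]$, and let $V,V'$ be classes of valuations on $2^{[m]}$. If $M$ is $(\lambda,\mu)$-smooth for the class $V'$ and $V$ is pointwise $\beta$-approximated by $V'$ (for some $\beta\ge1$), then $M$ is $(\lambda/\beta,\mu)$-smooth for the class $V$.
   Context: In a mechanism, each bidder $i$ chooses a strategy $b_i$; the outcome of a strategy profile $b$ gives $i$ a set $S_i(b)$ (the sets being disjoint) and a payment $P_i(b)$, with quasi-linear utility $u_i(b;v_i)=v_i(S_i(b))-P_i(b)$. $SW(\mathrm{OPT}(v))=\max\{\sum_iv_i(S_i):(S_i)\text{ a partition of }[m]\}$. A mechanism is $(\lambda,\mu)$-smooth for a valuation class $V$ if for every valuation profile $v$ with all $v_i\in V$ there exist deviation mappings $b_i'$ from strategies of $i$ to strategies of $i$ (depending on $v$) such that for every strategy profile $b$: $\sum_iu_i(b_i'(b_i),b_{-i};v_i)\ge\lambda SW(\mathrm{OPT}(v))-\mu\sum_iP_i(b)$. A valuation class $V$ is pointwise $\beta$-approximated by a class $V'$ if for every $v\in V$ and every $S\subseteq[m]$ there exists $v'\in V'$ (which may depend on $S$) with $\beta v'(S)\ge v(S)$ and $v(T)\ge v'(T)$ for all $T\subseteq[m]$. *)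

theory Defs
  imports Complex_Main "HOL-Library.FuncSet"
begin

text \<open>A mechanism is given by an allocation function alloc b i (the set S_i(b))
and a payment function pay b i (P_i(b)).\<close>

definition is_mechanism ::
  "nat \<Rightarrow> nat \<Rightarrow> (nat \<Rightarrow> 'b set) \<Rightarrow> ((nat \<Rightarrow> 'b) \<Rightarrow> nat \<Rightarrow> nat set) \<Rightarrow> bool" where
  "is_mechanism n m Strat alloc \<longleftrightarrow>
     (\<forall>b \<in> PiE {..<n} Strat.
        (\<forall>i<n. alloc b i \<subseteq> {..<m}) \<and>
        (\<forall>i<n. \<forall>j<n. i \<noteq> j \<longrightarrow> alloc b i \<inter> alloc b j = {}))"

definition utility ::
  "((nat \<Rightarrow> 'b) \<Rightarrow> nat \<Rightarrow> nat set) \<Rightarrow> ((nat \<Rightarrow> 'b) \<Rightarrow> nat \<Rightarrow> real)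
   \<Rightarrow> (nat \<Rightarrow> 'b) \<Rightarrow> nat \<Rightarrow> (nat set \<Rightarrow> real) \<Rightarrow> real" where
  "utility alloc pay b i vi = vi (alloc b i) - pay b i"

definition partitions :: "nat \<Rightarrow> nat \<Rightarrow> (nat \<Rightarrow> nat set) set" where
  "partitions n m = {S \<in> PiE {..<n} (\<lambda>_. Pow {..<m}).
       (\<forall>i<n. \<forall>j<n. i \<noteq> j \<longrightarrow> S i \<inter> S j = {}) \<and> (\<Union>i<n. S i) = {..<m}}"

definition opt_sw :: "nat \<Rightarrow> nat \<Rightarrow> (nat \<Rightarrow> nat set \<Rightarrow> real) \<Rightarrow> real" where
  "opt_sw n m v = Max ((\<lambda>S. \<Sum>i<n. v i (S i)) ` partitions n m)"

definition smooth ::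
  "nat \<Rightarrow> nat \<Rightarrow> (nat \<Rightarrow> 'b set) \<Rightarrow> ((nat \<Rightarrow> 'b) \<Rightarrow> nat \<Rightarrow> nat set) \<Rightarrow> ((nat \<Rightarrow> 'b) \<Rightarrow> nat \<Rightarrow> real)
   \<Rightarrow> (nat set \<Rightarrow> real) set \<Rightarrow> real \<Rightarrow> real \<Rightarrow> bool" where
  "smooth n m Strat alloc pay V lam mu \<longleftrightarrow>
     (\<forall>v. (\<forall>i<n. v i \<in> V) \<longrightarrow>
        (\<exists>b'. (\<forall>i<n. \<forall>s\<in>Strat i. b' i s \<in> Strat i) \<and>
           (\<forall>b \<in> PiE {..<n} Strat.
              (\<Sum>i<n. utility alloc pay (b(i := b' i (b i))) i (v i))
                \<ge> lam * opt_sw n m v - mu * (\<Sum>i<n. pay b i))))"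

definition pointwise_approx ::
  "nat \<Rightarrow> (nat set \<Rightarrow> real) set \<Rightarrow> (nat set \<Rightarrow> real) set \<Rightarrow> real \<Rightarrow> bool" where
  "pointwise_approx m V V' beta \<longleftrightarrow>
     (\<forall>v\<in>V. \<forall>S. S \<subseteq> {..<m} \<longrightarrow>
        (\<exists>v'\<in>V'. beta * v' S \<ge> v S \<and> (\<forall>T. T \<subseteq> {..<m} \<longrightarrow> v T \<ge> v' T)))"

end

theory Submission
  imports Defs
begin

text \<open>Fix a profile \<open>v\<close> from \<open>V\<close> and an optimal partition \<open>S\<close> for it. Approximating each \<open>v i\<close>
at \<open>S i\<close> from below by some \<open>w i \<in> V'\<close> gives \<open>OPT(v) \<le> \<beta> \<Sum>i. w i (S i) \<le> \<beta> OPT(w)\<close>. The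
deviations that witness smoothness for \<open>w\<close> also work for \<open>v\<close>: since \<open>v i \<ge> w i\<close> on all
bundles, every deviating utility can only grow when \<open>w\<close> is replaced by \<open>v\<close>.\<close>

lemma finite_partitions: "finite (partitions n m)"
proof -
  have "finite (PiE {..<n} (\<lambda>_. Pow {..<m}))" by (intro finite_PiE) auto
  then show ?thesis unfolding partitions_def by auto
qed

lemma partitions_nonempty:
  assumes "0 < n"
  shows "partitions n m \<noteq> {}"
proof -
  define S :: "nat \<Rightarrow> nat set"
    where "S = (\<lambda>i. if i = 0 then {..<m} else if i < n then {} else undefined)"
  have "S \<in> partitions n m"
    unfolding partitions_def S_def using assms
    by (auto simp: PiE_def extensional_def split: if_splits)
  then show ?thesis by auto
qed

lemma sum_le_opt_sw:
  assumes "S \<in> partitions n m"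
  shows "(\<Sum>i<n. v i (S i)) \<le> opt_sw n m v"
  unfolding opt_sw_def using assms finite_partitions by auto

lemma opt_sw_attained:
  assumes "0 < n"
  obtains S where "S \<in> partitions n m" and "opt_sw n m v = (\<Sum>i<n. v i (S i))"
proof -
  let ?sw = "\<lambda>S. \<Sum>i<n. v i (S i)"
  have "Max (?sw ` partitions n m) \<in> ?sw ` partitions n m"
    using finite_partitions partitions_nonempty[OF assms] by (intro Max_in) auto
  then show ?thesis using that unfolding opt_sw_def by auto
qed

text \<open>Without bidders \<open>opt_sw\<close> ignores the valuations (for \<open>m > 0\<close> it is the junk value
\<open>Max {}\<close>), so that case of the theorem rests on the smoothness hypothesis alone.\<close>

lemma opt_sw_no_bidders: "opt_sw 0 m v = opt_sw 0 m u"
  by (simp add: opt_sw_def)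

lemma smooth_no_bidders_iff:
  "smooth 0 m Strat alloc pay V lam mu \<longleftrightarrow> lam * opt_sw 0 m (\<lambda>_ _. 0) \<le> 0"
proof -
  have "smooth 0 m Strat alloc pay V lam mu \<longleftrightarrow> (\<forall>v. lam * opt_sw 0 m v \<le> 0)"
    unfolding smooth_def by simp
  then show ?thesis using opt_sw_no_bidders by metis
qed

lemma pointwise_approx_opt_sw:
  assumes approx: "pointwise_approx m V V' beta"
    and "0 \<le> beta" and "0 < n" and vV: "\<forall>i<n. v i \<in> V"
  obtains w where "\<forall>i<n. w i \<in> V'" and "\<forall>i<n. \<forall>T\<subseteq>{..<m}. w i T \<le> v i T"
    and "opt_sw n m v \<le> beta * opt_sw n m w"
proof -
  obtain S where S: "S \<in> partitions n m" and opt: "opt_sw n m v = (\<Sum>i<n. v i (S i))"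
    using opt_sw_attained[OF \<open>0 < n\<close>] .
  have "\<forall>i<n. S i \<subseteq> {..<m}" using S unfolding partitions_def by auto
  then have "\<forall>i<n. \<exists>w\<in>V'. v i (S i) \<le> beta * w (S i) \<and> (\<forall>T\<subseteq>{..<m}. w T \<le> v i T)"
    using approx vV unfolding pointwise_approx_def by blast
  then obtain w where w: "\<And>i. i < n \<Longrightarrow>
      w i \<in> V' \<and> v i (S i) \<le> beta * w i (S i) \<and> (\<forall>T\<subseteq>{..<m}. w i T \<le> v i T)"
    by metis
  have "opt_sw n m v \<le> beta * (\<Sum>i<n. w i (S i))"
    unfolding opt sum_distrib_left using w by (intro sum_mono) auto
  also have "\<dots> \<le> beta * opt_sw n m w"
    using sum_le_opt_sw[OF S] \<open>0 \<le> beta\<close> by (intro mult_left_mono)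
  finally show ?thesis using that w by blast
qed

lemma smooth_dominated:
  assumes mech: "is_mechanism n m Strat alloc"
    and smooth': "smooth n m Strat alloc pay V' lam mu"
    and dominated: "\<And>v. \<forall>i<n. v i \<in> V \<Longrightarrow> \<exists>w. (\<forall>i<n. w i \<in> V') \<and>
        (\<forall>i<n. \<forall>T\<subseteq>{..<m}. w i T \<le> v i T) \<and> lam' * opt_sw n m v \<le> lam * opt_sw n m w"
  shows "smooth n m Strat alloc pay V lam' mu"
  unfolding smooth_def
proof (intro allI impI)
  fix v :: "nat \<Rightarrow> nat set \<Rightarrow> real"
  assume "\<forall>i<n. v i \<in> V"
  then obtain w where wV': "\<forall>i<n. w i \<in> V'" and w_le: "\<forall>i<n. \<forall>T\<subseteq>{..<m}. w i T \<le> v i T"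
    and opt: "lam' * opt_sw n m v \<le> lam * opt_sw n m w"
    using dominated by blast
  obtain b' where b'_Strat: "\<forall>i<n. \<forall>s\<in>Strat i. b' i s \<in> Strat i"
    and b'_smooth: "\<forall>b \<in> PiE {..<n} Strat.
        (\<Sum>i<n. utility alloc pay (b(i := b' i (b i))) i (w i))
          \<ge> lam * opt_sw n m w - mu * (\<Sum>i<n. pay b i)"
    using smooth' wV' unfolding smooth_def by blast
  have "(\<Sum>i<n. utility alloc pay (b(i := b' i (b i))) i (v i))
          \<ge> lam' * opt_sw n m v - mu * (\<Sum>i<n. pay b i)"
    if b: "b \<in> PiE {..<n} Strat" for b
  proof -
    have "utility alloc pay (b(i := b' i (b i))) i (w i)
        \<le> utility alloc pay (b(i := b' i (b i))) i (v i)" if "i < n" for i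
    proof -
      have "b(i := b' i (b i)) \<in> PiE (insert i {..<n}) Strat"
        using b b'_Strat \<open>i < n\<close> by (intro PiE_fun_upd) auto
      then have "alloc (b(i := b' i (b i))) i \<subseteq> {..<m}"
        using mech \<open>i < n\<close> unfolding is_mechanism_def by (simp add: insert_absorb)
      then show ?thesis using w_le \<open>i < n\<close> by (simp add: utility_def)
    qed
    then have "(\<Sum>i<n. utility alloc pay (b(i := b' i (b i))) i (w i))
        \<le> (\<Sum>i<n. utility alloc pay (b(i := b' i (b i))) i (v i))"
      by (intro sum_mono) auto
    then show ?thesis using b'_smooth b opt by fastforce
  qed
  then show "\<exists>b'. (\<forall>i<n. \<forall>s\<in>Strat i. b' i s \<in> Strat i) \<and>
      (\<forall>b \<in> PiE {..<n} Strat. (\<Sum>i<n. utility alloc pay (b(i := b' i (b i))) i (v i))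
          \<ge> lam' * opt_sw n m v - mu * (\<Sum>i<n. pay b i))"
    using b'_Strat by blast
qed

theorem mainTheorem11:
  fixes n m :: nat
    and Strat :: "nat \<Rightarrow> 'b set"
    and alloc :: "(nat \<Rightarrow> 'b) \<Rightarrow> nat \<Rightarrow> nat set"
    and pay :: "(nat \<Rightarrow> 'b) \<Rightarrow> nat \<Rightarrow> real"
    and V V' :: "(nat set \<Rightarrow> real) set"
    and lam mu beta :: real
  assumes "is_mechanism n m Strat alloc"
    and "0 \<le> lam"
    and "1 \<le> beta"
    and "smooth n m Strat alloc pay V' lam mu"
    and "pointwise_approx m V V' beta"
  shows "smooth n m Strat alloc pay V (lam / beta) mu"
proof (cases "n = 0")
  case True
  then show ?thesis
    using assms(3,4) by (simp add: smooth_no_bidders_iff divide_nonpos_pos)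
next
  case False
  show ?thesis
  proof (rule smooth_dominated[OF assms(1,4)])
    fix v assume "\<forall>i<n. v i \<in> V"
    with assms(3,5) False obtain w where "\<forall>i<n. w i \<in> V'"
      and "\<forall>i<n. \<forall>T\<subseteq>{..<m}. w i T \<le> v i T" and opt: "opt_sw n m v \<le> beta * opt_sw n m w"
      by (elim pointwise_approx_opt_sw) auto
    moreover have "lam / beta * opt_sw n m v \<le> lam * opt_sw n m w"
      using mult_left_mono[OF opt \<open>0 \<le> lam\<close>] assms(3) by (simp add: field_simps)
    ultimately show "\<exists>w. (\<forall>i<n. w i \<in> V') \<and> (\<forall>i<n. \<forall>T\<subseteq>{..<m}. w i T \<le> v i T)
        \<and> lam / beta * opt_sw n m v \<le> lam * opt_sw n m w"
      by blast
  qed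
qed

end
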